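(* Let $\psi$ be an $n$-dimensional unique sink orientation, run Algorithm 1 on $\psi$ from a starting vertex $v^0$, and let $\rho$ be the iteration in which it terminates. Then $\rho \leq |r_\psi(v^0)|$.
   Context: Let $Q^n = 2^{[n]}$ be the vertex set of the $n$-cube, with $u,v$ adjacent iff $|u\oplus v|=1$; faces are $F_{J,v}=\{u : v\oplus u\subseteq J\}$ for $J\subseteq[n]$. A unique sink orientation (USO) is an orientation of the cube's edges such that every nonempty face has a unique sink (vertex with no outgoing edges within the face). The outmap $s_\psi(v)$ is the set of coordinates $j$ such that the edge $\{v,v\oplus\{j\}\}$ is directed away from $v$. The reachmap is $r_\psi(v)=s_\psi(v)\cup\{j : \exists u \text{ reachable from } v \text{ by a directed path with } j\in s_\psi(u)\}$. Algorithm 1: given a starting vertex $v^0$, set $E^0=\emptyset$ and $j=0$; while $s_\psi(v^j)\neq\emptyset$: pick any $b\in s_\psi(v^j)$, let $v^{j+1}$ be the sink of the face $F_{E^j, v^j\oplus\{b\}}$ (computed by the Fibonacci Seesaw algorithm of Szabó and Welzl), set $E^{j+1}=E^j\cup\{b\}$ and $j\leftarrow j+1$. The algorithm terminates at iteration $\rho$ when $s_\psi(v^\rho)=\emptyset$. *)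

theory Defs
  imports Main
begin

text \<open>Vertices of the n-cube are subsets of [n] = {0..<n}; an orientation is given
by its outmap s (the set of coordinates whose edge points away from the vertex).\<close>

definition symdiff :: "nat set \<Rightarrow> nat set \<Rightarrow> nat set" where
  "symdiff u v = (u - v) \<union> (v - u)"

definition cube :: "nat \<Rightarrow> nat set set" where
  "cube n = Pow {0..<n}"

definition face :: "nat \<Rightarrow> nat set \<Rightarrow> nat set \<Rightarrow> nat set set" where
  "face n J v = {u \<in> cube n. symdiff v u \<subseteq> J}"

definition is_orientation :: "nat \<Rightarrow> (nat set \<Rightarrow> nat set) \<Rightarrow> bool" where
  "is_orientation n s \<longleftrightarrow>
     (\<forall>v \<in> cube n. s v \<subseteq> {0..<n} \<and>
        (\<forall>j < n. j \<in> s v \<longleftrightarrow> j \<notin> s (symdiff v {j})))"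

definition is_face_sink :: "nat \<Rightarrow> (nat set \<Rightarrow> nat set) \<Rightarrow> nat set \<Rightarrow> nat set \<Rightarrow> nat set \<Rightarrow> bool" where
  "is_face_sink n s J v u \<longleftrightarrow> u \<in> face n J v \<and> s u \<inter> J = {}"

definition is_USO :: "nat \<Rightarrow> (nat set \<Rightarrow> nat set) \<Rightarrow> bool" where
  "is_USO n s \<longleftrightarrow> is_orientation n s \<and>
     (\<forall>J \<subseteq> {0..<n}. \<forall>v \<in> cube n. \<exists>!u. is_face_sink n s J v u)"

definition dstep :: "(nat set \<Rightarrow> nat set) \<Rightarrow> nat set \<Rightarrow> nat set \<Rightarrow> bool" where
  "dstep s u w \<longleftrightarrow> (\<exists>j \<in> s u. w = symdiff u {j})"

definition reachmap :: "(nat set \<Rightarrow> nat set) \<Rightarrow> nat set \<Rightarrow> nat set" where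
  "reachmap s v = s v \<union> {j. \<exists>u. (dstep s)\<^sup>*\<^sup>* v u \<and> j \<in> s u}"

text \<open>A (terminating) run of Algorithm 1 from v0 ending at iteration rho:
vertices vs, direction sets E, chosen coordinates b. The sink of the face is
unique in a USO, so it is what the Fibonacci Seesaw returns.\<close>
definition alg1_run :: "nat \<Rightarrow> (nat set \<Rightarrow> nat set) \<Rightarrow> nat set \<Rightarrow>
    (nat \<Rightarrow> nat set) \<Rightarrow> (nat \<Rightarrow> nat set) \<Rightarrow> (nat \<Rightarrow> nat) \<Rightarrow> nat \<Rightarrow> bool" where
  "alg1_run n s v0 vs E b rho \<longleftrightarrow>
     vs 0 = v0 \<and> E 0 = {} \<and>
     (\<forall>j < rho. s (vs j) \<noteq> {} \<and> b j \<in> s (vs j) \<and>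
        is_face_sink n s (E j) (symdiff (vs j) {b j}) (vs (Suc j)) \<and>
        E (Suc j) = E j \<union> {b j}) \<and>
     s (vs rho) = {}"

end

theory Submission
  imports Defs
begin

text \<open>Every vertex v_j of a run is reachable from v_0: the sink of a face is reachable from
each of its vertices, by induction on the dimension of the face (the sink of F_{J+k,x} is
either the sink of the facet F_{J,x} or the sink of the opposite facet, which is entered by
the k-edge leaving the former sink). Moreover v_j is the sink of F_{E_j,v_j}, so the chosen
coordinate b_j is never in E_j. Hence E_rho consists of rho distinct coordinates, each in the
outmap of a vertex reachable from v_0, and rho = |E_rho| <= |r(v_0)|.\<close>

lemma symdiff_singleton_in_cube: "v \<in> cube n \<Longrightarrow> j < n \<Longrightarrow> symdiff v {j} \<in> cube n"
  by (auto simp: cube_def symdiff_def)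

lemma outmap_less:
  "is_orientation n s \<Longrightarrow> v \<in> cube n \<Longrightarrow> j \<in> s v \<Longrightarrow> j < n"
  unfolding is_orientation_def by fastforce

lemma dstep_in_cube: "is_orientation n s \<Longrightarrow> u \<in> cube n \<Longrightarrow> dstep s u w \<Longrightarrow> w \<in> cube n"
  unfolding dstep_def is_orientation_def using symdiff_singleton_in_cube by fastforce

lemma rtranclp_dstep_in_cube:
  "(dstep s)\<^sup>*\<^sup>* u w \<Longrightarrow> is_orientation n s \<Longrightarrow> u \<in> cube n \<Longrightarrow> w \<in> cube n"
  by (induction rule: rtranclp_induct) (auto intro: dstep_in_cube)

lemma reachmap_subset:
  assumes "is_orientation n s" and "v \<in> cube n"
  shows "reachmap s v \<subseteq> {0..<n}"
proof
  fix k assume "k \<in> reachmap s v"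
  then obtain u where "(dstep s)\<^sup>*\<^sup>* v u" "k \<in> s u" by (auto simp: reachmap_def)
  moreover from this(1) have "u \<in> cube n" using assms by (rule rtranclp_dstep_in_cube)
  ultimately show "k \<in> {0..<n}" using assms(1) unfolding is_orientation_def by blast
qed

lemma USO_face_sink_unique:
  "is_USO n s \<Longrightarrow> J \<subseteq> {0..<n} \<Longrightarrow> v \<in> cube n \<Longrightarrow>
   is_face_sink n s J v u \<Longrightarrow> is_face_sink n s J v w \<Longrightarrow> u = w"
  unfolding is_USO_def by blast

lemma USO_ex_face_sink:
  "is_USO n s \<Longrightarrow> J \<subseteq> {0..<n} \<Longrightarrow> v \<in> cube n \<Longrightarrow> \<exists>u. is_face_sink n s J v u"
  unfolding is_USO_def by blast

lemma face_sink_cong: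
  "w \<in> face n J v \<Longrightarrow> is_face_sink n s J w u \<longleftrightarrow> is_face_sink n s J v u"
  by (auto simp: is_face_sink_def face_def symdiff_def)

lemma face_sink_insert_cases:
  "is_face_sink n s (insert k J) x u \<Longrightarrow>
   is_face_sink n s J x u \<or> is_face_sink n s J (symdiff x {k}) u"
  by (auto simp: is_face_sink_def face_def symdiff_def)

lemma face_sink_insertI:
  "is_face_sink n s J x u \<Longrightarrow> k \<notin> s u \<Longrightarrow> is_face_sink n s (insert k J) x u"
  by (auto simp: is_face_sink_def face_def)

lemma face_sink_reachable:
  assumes USO: "is_USO n s" and "finite J"
  shows "J \<subseteq> {0..<n} \<Longrightarrow> x \<in> cube n \<Longrightarrow> is_face_sink n s J x u \<Longrightarrow> (dstep s)\<^sup>*\<^sup>* x u"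
  using \<open>finite J\<close>
proof (induction J arbitrary: x u rule: finite_induct)
  case empty
  then have "u = x" by (auto simp: is_face_sink_def face_def symdiff_def)
  then show ?case by simp
next
  case (insert k J)
  then have J: "J \<subseteq> {0..<n}" and "k < n" by auto
  obtain t where t: "is_face_sink n s J x t"
    using USO_ex_face_sink[OF USO J \<open>x \<in> cube n\<close>] by blast
  have "(dstep s)\<^sup>*\<^sup>* x t" using insert.IH[OF J \<open>x \<in> cube n\<close> t] .
  show ?case
  proof (cases "u = t")
    case True
    with \<open>(dstep s)\<^sup>*\<^sup>* x t\<close> show ?thesis by simp
  next
    case False
    define t' where "t' = symdiff t {k}"
    have "k \<in> s t"
      using False USO_face_sink_unique[OF USO insert.prems(1,2) insert.prems(3)]
        face_sink_insertI[OF t] by blast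
    then have "dstep s t t'" by (auto simp: dstep_def t'_def)
    have "t \<in> cube n" using t by (simp add: is_face_sink_def face_def)
    then have "t' \<in> cube n" using \<open>k < n\<close> by (simp add: t'_def symdiff_singleton_in_cube)
    have "\<not> is_face_sink n s J x u"
      using False USO_face_sink_unique[OF USO J \<open>x \<in> cube n\<close> t] by blast
    then have "is_face_sink n s J (symdiff x {k}) u"
      using face_sink_insert_cases[OF insert.prems(3)] by blast
    moreover have "t' \<in> face n J (symdiff x {k})"
      using t \<open>t' \<in> cube n\<close> by (auto simp: is_face_sink_def face_def t'_def symdiff_def)
    ultimately have "is_face_sink n s J t' u" by (simp add: face_sink_cong)
    then have "(dstep s)\<^sup>*\<^sup>* t' u" using insert.IH[OF J \<open>t' \<in> cube n\<close>] by blast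
    with \<open>(dstep s)\<^sup>*\<^sup>* x t\<close> \<open>dstep s t t'\<close> show ?thesis
      by (meson converse_rtranclp_into_rtranclp rtranclp_trans)
  qed
qed

lemma face_sink_of_flipped_face:
  assumes USO: "is_USO n s" and v: "v \<in> cube n" and E: "E \<subseteq> {0..<n}"
    and "s v \<inter> E = {}" and "b \<in> s v"
    and w: "is_face_sink n s E (symdiff v {b}) w"
  shows "is_face_sink n s (insert b E) v w"
proof -
  have "b < n" using USO v \<open>b \<in> s v\<close> by (meson is_USO_def outmap_less)
  then have bE: "insert b E \<subseteq> {0..<n}" using E by simp
  obtain u where u: "is_face_sink n s (insert b E) v u"
    using USO_ex_face_sink[OF USO bE v] by blast
  have "is_face_sink n s E v v"
    using v \<open>s v \<inter> E = {}\<close> by (simp add: is_face_sink_def face_def symdiff_def)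
  then have "\<not> is_face_sink n s E v u"
    using USO_face_sink_unique[OF USO E v] u \<open>b \<in> s v\<close> by (auto simp: is_face_sink_def)
  then have "is_face_sink n s E (symdiff v {b}) u"
    using face_sink_insert_cases[OF u] by blast
  moreover have "symdiff v {b} \<in> cube n"
    using v \<open>b < n\<close> by (rule symdiff_singleton_in_cube)
  ultimately have "u = w" using USO_face_sink_unique[OF USO E _ _ w] by blast
  with u show ?thesis by simp
qed

lemma alg1_run_invariant:
  assumes USO: "is_USO n s" and "v0 \<in> cube n"
    and run: "alg1_run n s v0 vs E b rho" and "j \<le> rho"
  shows "vs j \<in> cube n \<and> s (vs j) \<inter> E j = {} \<and> E j \<subseteq> {0..<n} \<and> card (E j) = j \<and>
    E j \<subseteq> reachmap s v0 \<and> (dstep s)\<^sup>*\<^sup>* v0 (vs j)"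
  using \<open>j \<le> rho\<close>
proof (induction j)
  case 0
  then show ?case using run \<open>v0 \<in> cube n\<close> by (simp add: alg1_run_def)
next
  case (Suc j)
  then have IH: "vs j \<in> cube n" "s (vs j) \<inter> E j = {}" "E j \<subseteq> {0..<n}" "card (E j) = j"
      "E j \<subseteq> reachmap s v0" "(dstep s)\<^sup>*\<^sup>* v0 (vs j)"
    by auto
  have b: "b j \<in> s (vs j)" and ES: "E (Suc j) = insert (b j) (E j)"
    and sink: "is_face_sink n s (E j) (symdiff (vs j) {b j}) (vs (Suc j))"
    using run Suc.prems by (auto simp: alg1_run_def)
  have "b j < n" using USO IH(1) b by (meson is_USO_def outmap_less)
  have "b j \<notin> E j" using IH(2) b by blast
  have "finite (E j)" using IH(3) finite_subset by blast
  have new_sink: "is_face_sink n s (E (Suc j)) (vs j) (vs (Suc j))"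
    unfolding ES using face_sink_of_flipped_face[OF USO IH(1,3,2) b sink] .
  have "symdiff (vs j) {b j} \<in> cube n"
    using IH(1) \<open>b j < n\<close> by (rule symdiff_singleton_in_cube)
  then have "(dstep s)\<^sup>*\<^sup>* (symdiff (vs j) {b j}) (vs (Suc j))"
    using face_sink_reachable[OF USO \<open>finite (E j)\<close> IH(3) _ sink] by blast
  moreover have "dstep s (vs j) (symdiff (vs j) {b j})" using b by (auto simp: dstep_def)
  ultimately have "(dstep s)\<^sup>*\<^sup>* v0 (vs (Suc j))"
    using IH(6) by (meson converse_rtranclp_into_rtranclp rtranclp_trans)
  moreover have "b j \<in> reachmap s v0" using IH(6) b by (auto simp: reachmap_def)
  ultimately show ?case
    using new_sink IH \<open>b j < n\<close> \<open>b j \<notin> E j\<close> \<open>finite (E j)\<close> ES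
    by (auto simp: is_face_sink_def face_def)
qed

theorem lemma18:
  fixes n :: nat and s :: "nat set \<Rightarrow> nat set" and v0 :: "nat set"
    and vs E :: "nat \<Rightarrow> nat set" and b :: "nat \<Rightarrow> nat" and rho :: nat
  assumes "is_USO n s"
    and "v0 \<in> cube n"
    and "alg1_run n s v0 vs E b rho"
  shows "rho \<le> card (reachmap s v0)"
proof -
  have "is_orientation n s" using assms(1) by (simp add: is_USO_def)
  then have "finite (reachmap s v0)"
    using reachmap_subset assms(2) by (meson finite_atLeastLessThan finite_subset)
  moreover have "card (E rho) = rho" and "E rho \<subseteq> reachmap s v0"
    using alg1_run_invariant[OF assms order_refl] by auto
  ultimately show ?thesis using card_mono by metis
qed

end
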